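(* Let $\mathcal{G}$ be a groupoid, $\mathbb{K}$ a field, $S$ a $\mathbb{K}$-cancellative semigroup and $\Gamma:\mathcal{G}\to S$ a partial projective representation with factor set $\sigma$ and $D=\mathrm{dom}\,\sigma$, such that $\Gamma(r(x))\Gamma(x)=\Gamma(x)=\Gamma(x)\Gamma(d(x))$ for all $x\in\mathcal{G}$. If $(x,y) \in D$, then $(x,d(x)),(r(y),y) \in D$ and $$\sigma(x,d(x)) = \sigma(r(x),x) = \sigma(y,d(y)) = \sigma(r(y),y) = 1.$$
   Context: A groupoid is a nonempty set $\mathcal{G}$ with a partial associative product, each $g$ having right identity $d(g)=g^{-1}g$, left identity $r(g)=gg^{-1}$ and inverse $g^{-1}$; $xy$ is defined ($\exists xy$) iff $d(x)=r(y)$; $\mathcal{G}_0$ identities, $\mathcal{G}^2$ composable pairs. A $\mathbb{K}$-semigroup is a semigroup $S$ with zero with a scalar action $\mathbb{K}\times S\to S$ satisfying $\alpha(\beta x)=(\alpha\beta)x$, $1x=x$, $\alpha(xy)=(\alpha x)y=x(\alpha y)$, $0x=0$; it is $\mathbb{K}$-cancellative if $\alpha x=\beta x$, $x\ne0$ imply $\alpha=\beta$. Let $\mathcal{P}(S)=S/\lambda$ where $x\lambda y$ iff $x=\alpha y$ for some $\alpha\in\mathbb{K}^*$, and $\xi:S\to\mathcal{P}(S)$ the projection. A partial projective representation of $\mathcal{G}$ on $S$ is a map $\Gamma:\mathcal{G}\to S$ such that $\xi\Gamma$ is a partial homomorphism, i.e. whenever $\exists xy$: $\xi\Gamma(x^{-1})\xi\Gamma(x)\xi\Gamma(y)=\xi\Gamma(x^{-1})\xi\Gamma(xy)$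 and $\xi\Gamma(x)\xi\Gamma(y)\xi\Gamma(y^{-1})=\xi\Gamma(xy)\xi\Gamma(y^{-1})$. Its factor set is the unique partially defined map $\sigma:\mathcal{G}\times\mathcal{G}\to\mathbb{K}^*$ with $\mathrm{dom}\,\sigma=\{(x,y)\in\mathcal{G}^2:\Gamma(x)\Gamma(y)\ne0\}$ and $\Gamma(x^{-1})\Gamma(x)\Gamma(y)=\Gamma(x^{-1})\Gamma(xy)\sigma(x,y)$, $\Gamma(x)\Gamma(y)\Gamma(y^{-1})=\Gamma(xy)\Gamma(y^{-1})\sigma(x,y)$ for $(x,y)\in\mathrm{dom}\,\sigma$. *)

theory Defs
  imports Main
begin

text \<open>A groupoid is given by a carrier G, a product function mult (meaningful only on
composable pairs) and an inverse function ginv.\<close>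

definition gd :: "('g \<Rightarrow> 'g \<Rightarrow> 'g) \<Rightarrow> ('g \<Rightarrow> 'g) \<Rightarrow> 'g \<Rightarrow> 'g" where
  "gd mult ginv x = mult (ginv x) x"

definition gr :: "('g \<Rightarrow> 'g \<Rightarrow> 'g) \<Rightarrow> ('g \<Rightarrow> 'g) \<Rightarrow> 'g \<Rightarrow> 'g" where
  "gr mult ginv x = mult x (ginv x)"

definition composable :: "('g \<Rightarrow> 'g \<Rightarrow> 'g) \<Rightarrow> ('g \<Rightarrow> 'g) \<Rightarrow> 'g \<Rightarrow> 'g \<Rightarrow> bool" where
  "composable mult ginv x y \<longleftrightarrow> gd mult ginv x = gr mult ginv y"

definition groupoid :: "'g set \<Rightarrow> ('g \<Rightarrow> 'g \<Rightarrow> 'g) \<Rightarrow> ('g \<Rightarrow> 'g) \<Rightarrow> bool" where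
  "groupoid G mult ginv \<longleftrightarrow>
     G \<noteq> {} \<and>
     (\<forall>x\<in>G. ginv x \<in> G \<and> ginv (ginv x) = x) \<and>
     (\<forall>x\<in>G. \<forall>y\<in>G. composable mult ginv x y \<longrightarrow>
        mult x y \<in> G \<and> gd mult ginv (mult x y) = gd mult ginv y \<and>
        gr mult ginv (mult x y) = gr mult ginv x) \<and>
     (\<forall>x\<in>G. \<forall>y\<in>G. \<forall>z\<in>G. composable mult ginv x y \<and> composable mult ginv y z \<longrightarrow>
        mult (mult x y) z = mult x (mult y z)) \<and>
     (\<forall>x\<in>G. mult (gr mult ginv x) x = x \<and> mult x (gd mult ginv x) = x)"

definition K_semigroup :: "'s set \<Rightarrow> ('s \<Rightarrow> 's \<Rightarrow> 's) \<Rightarrow> 's \<Rightarrow> ('k::field \<Rightarrow> 's \<Rightarrow> 's) \<Rightarrow> bool" where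
  "K_semigroup S mul z act \<longleftrightarrow>
     (\<forall>x\<in>S. \<forall>y\<in>S. mul x y \<in> S) \<and>
     (\<forall>x\<in>S. \<forall>y\<in>S. \<forall>w\<in>S. mul (mul x y) w = mul x (mul y w)) \<and>
     z \<in> S \<and> (\<forall>x\<in>S. mul z x = z \<and> mul x z = z) \<and>
     (\<forall>\<alpha> x. x \<in> S \<longrightarrow> act \<alpha> x \<in> S) \<and>
     (\<forall>\<alpha> \<beta> x. x \<in> S \<longrightarrow> act \<alpha> (act \<beta> x) = act (\<alpha> * \<beta>) x) \<and>
     (\<forall>x\<in>S. act 1 x = x) \<and>
     (\<forall>\<alpha>. \<forall>x\<in>S. \<forall>y\<in>S. act \<alpha> (mul x y) = mul (act \<alpha> x) y \<and> act \<alpha> (mul x y) = mul x (act \<alpha> y)) \<and>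
     (\<forall>x\<in>S. act 0 x = z)"

definition K_cancellative :: "'s set \<Rightarrow> ('s \<Rightarrow> 's \<Rightarrow> 's) \<Rightarrow> 's \<Rightarrow> ('k::field \<Rightarrow> 's \<Rightarrow> 's) \<Rightarrow> bool" where
  "K_cancellative S mul z act \<longleftrightarrow> K_semigroup S mul z act \<and>
     (\<forall>\<alpha> \<beta> x. x \<in> S \<longrightarrow> x \<noteq> z \<longrightarrow> act \<alpha> x = act \<beta> x \<longrightarrow> \<alpha> = \<beta>)"

text \<open>Equality of projections in P(S) = S/lambda is exactly this relation, and the product
 of P(S) is induced by that of S (xi(a) xi(b) = xi(ab)).\<close>

definition proj_eq :: "('k::field \<Rightarrow> 's \<Rightarrow> 's) \<Rightarrow> 's \<Rightarrow> 's \<Rightarrow> bool" where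
  "proj_eq act a b \<longleftrightarrow> (\<exists>\<alpha>. \<alpha> \<noteq> 0 \<and> a = act \<alpha> b)"

definition partial_proj_rep ::
  "'g set \<Rightarrow> ('g \<Rightarrow> 'g \<Rightarrow> 'g) \<Rightarrow> ('g \<Rightarrow> 'g) \<Rightarrow> 's set \<Rightarrow> ('s \<Rightarrow> 's \<Rightarrow> 's) \<Rightarrow>
   ('k::field \<Rightarrow> 's \<Rightarrow> 's) \<Rightarrow> ('g \<Rightarrow> 's) \<Rightarrow> bool" where
  "partial_proj_rep G mult ginv S mul act \<Gamma> \<longleftrightarrow>
     (\<forall>x\<in>G. \<Gamma> x \<in> S) \<and>
     (\<forall>x\<in>G. \<forall>y\<in>G. composable mult ginv x y \<longrightarrow>
        proj_eq act (mul (mul (\<Gamma> (ginv x)) (\<Gamma> x)) (\<Gamma> y)) (mul (\<Gamma> (ginv x)) (\<Gamma> (mult x y))) \<and>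
        proj_eq act (mul (mul (\<Gamma> x) (\<Gamma> y)) (\<Gamma> (ginv y))) (mul (\<Gamma> (mult x y)) (\<Gamma> (ginv y))))"

definition factor_dom ::
  "'g set \<Rightarrow> ('g \<Rightarrow> 'g \<Rightarrow> 'g) \<Rightarrow> ('g \<Rightarrow> 'g) \<Rightarrow> ('s \<Rightarrow> 's \<Rightarrow> 's) \<Rightarrow> 's \<Rightarrow> ('g \<Rightarrow> 's) \<Rightarrow> ('g \<times> 'g) set" where
  "factor_dom G mult ginv mul z \<Gamma> =
     {(x, y). x \<in> G \<and> y \<in> G \<and> composable mult ginv x y \<and> mul (\<Gamma> x) (\<Gamma> y) \<noteq> z}"

text \<open>sigma is the factor set of Gamma: on dom sigma it takes values in K^* and satisfies
 the two defining equations (its values off dom sigma are irrelevant).\<close>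

definition factor_set ::
  "'g set \<Rightarrow> ('g \<Rightarrow> 'g \<Rightarrow> 'g) \<Rightarrow> ('g \<Rightarrow> 'g) \<Rightarrow> ('s \<Rightarrow> 's \<Rightarrow> 's) \<Rightarrow> 's \<Rightarrow>
   ('k::field \<Rightarrow> 's \<Rightarrow> 's) \<Rightarrow> ('g \<Rightarrow> 's) \<Rightarrow> ('g \<Rightarrow> 'g \<Rightarrow> 'k) \<Rightarrow> bool" where
  "factor_set G mult ginv mul z act \<Gamma> \<sigma> \<longleftrightarrow>
     (\<forall>(x, y) \<in> factor_dom G mult ginv mul z \<Gamma>.
        \<sigma> x y \<noteq> 0 \<and>
        mul (mul (\<Gamma> (ginv x)) (\<Gamma> x)) (\<Gamma> y) = act (\<sigma> x y) (mul (\<Gamma> (ginv x)) (\<Gamma> (mult x y))) \<and>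
        mul (mul (\<Gamma> x) (\<Gamma> y)) (\<Gamma> (ginv y)) = act (\<sigma> x y) (mul (\<Gamma> (mult x y)) (\<Gamma> (ginv y))))"

end

theory Submission
  imports Defs
begin

text \<open>If \<open>\<Gamma> x \<noteq> 0\<close>, the partial homomorphism property for the pair \<open>(x\<inverse>, x)\<close> makes
\<open>\<Gamma>(x)\<Gamma>(x\<inverse>)\<Gamma>(x)\<close> a nonzero multiple of \<open>\<Gamma>(x)\<Gamma>(d x) = \<Gamma>(x)\<close>, so \<open>\<Gamma>(x\<inverse>)\<Gamma>(x)\<close> and
\<open>\<Gamma>(x)\<Gamma>(x\<inverse>)\<close> are nonzero.  The defining equation of \<open>\<sigma>(x, d x)\<close> reads
\<open>\<Gamma>(x\<inverse>)\<Gamma>(x) = \<sigma>(x, d x) \<Gamma>(x\<inverse>)\<Gamma>(x)\<close>, and K-cancellativity gives \<open>\<sigma>(x, d x) = 1\<close>;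
symmetrically for \<open>\<sigma>(r x, x)\<close>.  Both \<open>\<Gamma> x\<close> and \<open>\<Gamma> y\<close> are nonzero when \<open>(x, y) \<in> D\<close>.\<close>

lemma groupoid_ginv_closed: "groupoid G mult ginv \<Longrightarrow> x \<in> G \<Longrightarrow> ginv x \<in> G"
  and groupoid_ginv_ginv: "groupoid G mult ginv \<Longrightarrow> x \<in> G \<Longrightarrow> ginv (ginv x) = x"
  and groupoid_mult_gd: "groupoid G mult ginv \<Longrightarrow> x \<in> G \<Longrightarrow> mult x (gd mult ginv x) = x"
  and groupoid_mult_gr: "groupoid G mult ginv \<Longrightarrow> x \<in> G \<Longrightarrow> mult (gr mult ginv x) x = x"
  unfolding groupoid_def by auto

lemma groupoid_composable_ginv_left:
  "groupoid G mult ginv \<Longrightarrow> x \<in> G \<Longrightarrow> composable mult ginv (ginv x) x"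
  by (simp add: composable_def gd_def gr_def groupoid_ginv_ginv)

lemma groupoid_composable_ginv_right:
  "groupoid G mult ginv \<Longrightarrow> x \<in> G \<Longrightarrow> composable mult ginv x (ginv x)"
  by (simp add: composable_def gd_def gr_def groupoid_ginv_ginv)

lemma groupoid_mult_closed:
  "groupoid G mult ginv \<Longrightarrow> x \<in> G \<Longrightarrow> y \<in> G \<Longrightarrow> composable mult ginv x y \<Longrightarrow> mult x y \<in> G"
  and groupoid_gd_mult:
  "groupoid G mult ginv \<Longrightarrow> x \<in> G \<Longrightarrow> y \<in> G \<Longrightarrow> composable mult ginv x y \<Longrightarrow>
    gd mult ginv (mult x y) = gd mult ginv y"
  and groupoid_gr_mult:
  "groupoid G mult ginv \<Longrightarrow> x \<in> G \<Longrightarrow> y \<in> G \<Longrightarrow> composable mult ginv x y \<Longrightarrow>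
    gr mult ginv (mult x y) = gr mult ginv x"
  unfolding groupoid_def by blast+

lemma groupoid_gd_closed:
  assumes "groupoid G mult ginv" and "x \<in> G"
  shows "gd mult ginv x \<in> G" and "gr mult ginv (gd mult ginv x) = gd mult ginv x"
proof -
  have i: "ginv x \<in> G" by (rule groupoid_ginv_closed[OF assms])
  have c: "composable mult ginv (ginv x) x" by (rule groupoid_composable_ginv_left[OF assms])
  show "gd mult ginv x \<in> G"
    unfolding gd_def using groupoid_mult_closed[OF assms(1) i assms(2) c] .
  have "gr mult ginv (gd mult ginv x) = gr mult ginv (ginv x)"
    unfolding gd_def using groupoid_gr_mult[OF assms(1) i assms(2) c] .
  also have "\<dots> = gd mult ginv x"
    unfolding gr_def gd_def using groupoid_ginv_ginv[OF assms] by simp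
  finally show "gr mult ginv (gd mult ginv x) = gd mult ginv x" .
qed

lemma groupoid_gr_closed:
  assumes "groupoid G mult ginv" and "x \<in> G"
  shows "gr mult ginv x \<in> G" and "gd mult ginv (gr mult ginv x) = gr mult ginv x"
proof -
  have i: "ginv x \<in> G" by (rule groupoid_ginv_closed[OF assms])
  have c: "composable mult ginv x (ginv x)" by (rule groupoid_composable_ginv_right[OF assms])
  show "gr mult ginv x \<in> G"
    unfolding gr_def using groupoid_mult_closed[OF assms(1) assms(2) i c] .
  have "gd mult ginv (gr mult ginv x) = gd mult ginv (ginv x)"
    unfolding gr_def using groupoid_gd_mult[OF assms(1) assms(2) i c] .
  also have "\<dots> = gr mult ginv x"
    unfolding gr_def gd_def using groupoid_ginv_ginv[OF assms] by simp
  finally show "gd mult ginv (gr mult ginv x) = gr mult ginv x" .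
qed

lemma groupoid_composable_gd:
  "groupoid G mult ginv \<Longrightarrow> x \<in> G \<Longrightarrow> composable mult ginv x (gd mult ginv x)"
  by (simp add: composable_def groupoid_gd_closed)

lemma groupoid_composable_gr:
  "groupoid G mult ginv \<Longrightarrow> x \<in> G \<Longrightarrow> composable mult ginv (gr mult ginv x) x"
  by (simp add: composable_def groupoid_gr_closed)

context
  fixes S :: "'s set" and mul :: "'s \<Rightarrow> 's \<Rightarrow> 's" and z :: 's
    and act :: "'k::field \<Rightarrow> 's \<Rightarrow> 's"
begin

lemma K_semigroup_mul_zero:
  "K_semigroup S mul z act \<Longrightarrow> a \<in> S \<Longrightarrow> mul z a = z \<and> mul a z = z"
  unfolding K_semigroup_def by blast

lemma K_semigroup_mul_assoc:
  "K_semigroup S mul z act \<Longrightarrow> a \<in> S \<Longrightarrow> b \<in> S \<Longrightarrow> c \<in> S \<Longrightarrow>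
    mul (mul a b) c = mul a (mul b c)"
  unfolding K_semigroup_def by blast

lemma K_semigroup_act_closed:
  "K_semigroup S mul z act \<Longrightarrow> a \<in> S \<Longrightarrow> act \<alpha> a \<in> S"
  and K_semigroup_act_act:
  "K_semigroup S mul z act \<Longrightarrow> a \<in> S \<Longrightarrow> act \<alpha> (act \<beta> a) = act (\<alpha> * \<beta>) a"
  and K_semigroup_act_1:
  "K_semigroup S mul z act \<Longrightarrow> a \<in> S \<Longrightarrow> act 1 a = a"
  and K_semigroup_act_mul_left:
  "K_semigroup S mul z act \<Longrightarrow> a \<in> S \<Longrightarrow> b \<in> S \<Longrightarrow> act \<alpha> (mul a b) = mul (act \<alpha> a) b"
  unfolding K_semigroup_def by blast+

lemma K_semigroup_act_zero:
  assumes "K_semigroup S mul z act"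
  shows "act \<beta> z = z"
proof -
  have z: "z \<in> S" using assms unfolding K_semigroup_def by blast
  then have "act \<beta> z = act \<beta> (mul z z)" using assms K_semigroup_mul_zero by metis
  also have "\<dots> = mul (act \<beta> z) z" by (rule K_semigroup_act_mul_left[OF assms z z])
  also have "\<dots> = z" using assms z K_semigroup_act_closed K_semigroup_mul_zero by blast
  finally show ?thesis .
qed

lemma K_semigroup_act_eq_zero:
  assumes "K_semigroup S mul z act" and "a \<in> S" and "\<alpha> \<noteq> 0" and "act \<alpha> a = z"
  shows "a = z"
proof -
  have "a = act (inverse \<alpha> * \<alpha>) a" using assms K_semigroup_act_1 by simp
  also have "\<dots> = act (inverse \<alpha>) (act \<alpha> a)" using assms K_semigroup_act_act by metis
  also have "\<dots> = z" using assms K_semigroup_act_zero by simp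
  finally show ?thesis .
qed

lemma proj_eq_neq_zero:
  "K_semigroup S mul z act \<Longrightarrow> proj_eq act a b \<Longrightarrow> b \<in> S \<Longrightarrow> b \<noteq> z \<Longrightarrow> a \<noteq> z"
  unfolding proj_eq_def using K_semigroup_act_eq_zero by blast

lemma K_cancellative_act_eq_self:
  assumes "K_cancellative S mul z act" and "a \<in> S" and "a \<noteq> z" and "a = act \<alpha> a"
  shows "\<alpha> = 1"
proof -
  have "K_semigroup S mul z act" using assms(1) unfolding K_cancellative_def by blast
  then have "act \<alpha> a = act 1 a" using assms(2,4) K_semigroup_act_1 by metis
  then show ?thesis using assms(1-3) unfolding K_cancellative_def by blast
qed

end

locale unital_partial_proj_rep =
  fixes G :: "'g set" and mult :: "'g \<Rightarrow> 'g \<Rightarrow> 'g" and ginv :: "'g \<Rightarrow> 'g"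
    and S :: "'s set" and mul :: "'s \<Rightarrow> 's \<Rightarrow> 's" and z :: 's
    and act :: "'k::field \<Rightarrow> 's \<Rightarrow> 's" and \<Gamma> :: "'g \<Rightarrow> 's"
  assumes grpd: "groupoid G mult ginv"
    and canc: "K_cancellative S mul z act"
    and rep: "partial_proj_rep G mult ginv S mul act \<Gamma>"
    and unital: "\<forall>x\<in>G. mul (\<Gamma> (gr mult ginv x)) (\<Gamma> x) = \<Gamma> x \<and> \<Gamma> x = mul (\<Gamma> x) (\<Gamma> (gd mult ginv x))"
begin

abbreviation "d \<equiv> gd mult ginv"
abbreviation "r \<equiv> gr mult ginv"
abbreviation "D \<equiv> factor_dom G mult ginv mul z \<Gamma>"

lemma K_semigroup: "K_semigroup S mul z act"
  using canc unfolding K_cancellative_def by blast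

lemma rep_closed: "x \<in> G \<Longrightarrow> \<Gamma> x \<in> S"
  using rep unfolding partial_proj_rep_def by blast

lemma mul_closed: "a \<in> S \<Longrightarrow> b \<in> S \<Longrightarrow> mul a b \<in> S"
  using K_semigroup unfolding K_semigroup_def by blast

lemma factor_dom_rep_neq_zero:
  assumes "(x, y) \<in> D"
  shows "\<Gamma> x \<noteq> z" and "\<Gamma> y \<noteq> z"
  using assms K_semigroup_mul_zero[OF K_semigroup] rep_closed
  unfolding factor_dom_def by auto

lemma rep_sandwich_neq_zero:
  assumes x: "x \<in> G" and nz: "\<Gamma> x \<noteq> z"
  shows "mul (mul (\<Gamma> x) (\<Gamma> (ginv x))) (\<Gamma> x) \<noteq> z"
proof -
  have "proj_eq act (mul (mul (\<Gamma> (ginv (ginv x))) (\<Gamma> (ginv x))) (\<Gamma> x))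
                    (mul (\<Gamma> (ginv (ginv x))) (\<Gamma> (mult (ginv x) x)))"
    using rep x groupoid_ginv_closed[OF grpd] groupoid_composable_ginv_left[OF grpd]
    unfolding partial_proj_rep_def by blast
  then have "proj_eq act (mul (mul (\<Gamma> x) (\<Gamma> (ginv x))) (\<Gamma> x)) (\<Gamma> x)"
    using x unital groupoid_ginv_ginv[OF grpd] by (simp add: gd_def)
  then show ?thesis
    using proj_eq_neq_zero[OF K_semigroup] rep_closed x nz by blast
qed

lemma rep_ginv_mul_neq_zero:
  assumes x: "x \<in> G" and nz: "\<Gamma> x \<noteq> z"
  shows "mul (\<Gamma> (ginv x)) (\<Gamma> x) \<noteq> z" and "mul (\<Gamma> x) (\<Gamma> (ginv x)) \<noteq> z"
proof -
  have S: "\<Gamma> x \<in> S" "\<Gamma> (ginv x) \<in> S"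
    using x rep_closed groupoid_ginv_closed[OF grpd] by auto
  show "mul (\<Gamma> (ginv x)) (\<Gamma> x) \<noteq> z" "mul (\<Gamma> x) (\<Gamma> (ginv x)) \<noteq> z"
    using rep_sandwich_neq_zero[OF x nz] S K_semigroup_mul_zero[OF K_semigroup]
      K_semigroup_mul_assoc[OF K_semigroup] by metis+
qed

lemma gd_in_factor_dom: "x \<in> G \<Longrightarrow> \<Gamma> x \<noteq> z \<Longrightarrow> (x, d x) \<in> D"
  using unital groupoid_gd_closed[OF grpd] groupoid_composable_gd[OF grpd]
  unfolding factor_dom_def by auto

lemma gr_in_factor_dom: "x \<in> G \<Longrightarrow> \<Gamma> x \<noteq> z \<Longrightarrow> (r x, x) \<in> D"
  using unital groupoid_gr_closed[OF grpd] groupoid_composable_gr[OF grpd]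
  unfolding factor_dom_def by auto

context
  fixes \<sigma> :: "'g \<Rightarrow> 'g \<Rightarrow> 'k"
  assumes factor: "factor_set G mult ginv mul z act \<Gamma> \<sigma>"
begin

lemma factor_set_gd_eq_1:
  assumes x: "x \<in> G" and nz: "\<Gamma> x \<noteq> z"
  shows "\<sigma> x (d x) = 1"
proof -
  let ?a = "mul (\<Gamma> (ginv x)) (\<Gamma> x)"
  have S: "\<Gamma> x \<in> S" "\<Gamma> (ginv x) \<in> S" "\<Gamma> (d x) \<in> S"
    using x rep_closed groupoid_ginv_closed[OF grpd] groupoid_gd_closed[OF grpd] by auto
  have "mul ?a (\<Gamma> (d x)) = act (\<sigma> x (d x)) (mul (\<Gamma> (ginv x)) (\<Gamma> (mult x (d x))))"
    using factor gd_in_factor_dom[OF x nz] unfolding factor_set_def by fast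
  moreover have "mul ?a (\<Gamma> (d x)) = ?a"
    using S unital x K_semigroup_mul_assoc[OF K_semigroup] by metis
  ultimately have "?a = act (\<sigma> x (d x)) ?a"
    using groupoid_mult_gd[OF grpd x] by simp
  then show ?thesis
    using K_cancellative_act_eq_self[OF canc] mul_closed S rep_ginv_mul_neq_zero[OF x nz] by blast
qed

lemma factor_set_gr_eq_1:
  assumes x: "x \<in> G" and nz: "\<Gamma> x \<noteq> z"
  shows "\<sigma> (r x) x = 1"
proof -
  let ?a = "mul (\<Gamma> x) (\<Gamma> (ginv x))"
  have S: "\<Gamma> x \<in> S" "\<Gamma> (ginv x) \<in> S"
    using x rep_closed groupoid_ginv_closed[OF grpd] by auto
  have "mul (mul (\<Gamma> (r x)) (\<Gamma> x)) (\<Gamma> (ginv x)) = act (\<sigma> (r x) x) (mul (\<Gamma> (mult (r x) x)) (\<Gamma> (ginv x)))"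
    using factor gr_in_factor_dom[OF x nz] unfolding factor_set_def by fast
  then have "?a = act (\<sigma> (r x) x) ?a"
    using unital x groupoid_mult_gr[OF grpd x] by simp
  then show ?thesis
    using K_cancellative_act_eq_self[OF canc] mul_closed S rep_ginv_mul_neq_zero[OF x nz] by blast
qed

end

end

theorem mainTheorem9:
  fixes G :: "'g set" and mult :: "'g \<Rightarrow> 'g \<Rightarrow> 'g" and ginv :: "'g \<Rightarrow> 'g"
    and S :: "'s set" and mul :: "'s \<Rightarrow> 's \<Rightarrow> 's" and z :: 's
    and act :: "'k::field \<Rightarrow> 's \<Rightarrow> 's"
    and \<Gamma> :: "'g \<Rightarrow> 's" and \<sigma> :: "'g \<Rightarrow> 'g \<Rightarrow> 'k"
  assumes "groupoid G mult ginv"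
    and "K_cancellative S mul z act"
    and "partial_proj_rep G mult ginv S mul act \<Gamma>"
    and "factor_set G mult ginv mul z act \<Gamma> \<sigma>"
    and "\<forall>x\<in>G. mul (\<Gamma> (gr mult ginv x)) (\<Gamma> x) = \<Gamma> x \<and> \<Gamma> x = mul (\<Gamma> x) (\<Gamma> (gd mult ginv x))"
    and "(x, y) \<in> factor_dom G mult ginv mul z \<Gamma>"
  shows "(x, gd mult ginv x) \<in> factor_dom G mult ginv mul z \<Gamma> \<and>
         (gr mult ginv y, y) \<in> factor_dom G mult ginv mul z \<Gamma> \<and>
         \<sigma> x (gd mult ginv x) = 1 \<and> \<sigma> (gr mult ginv x) x = 1 \<and>
         \<sigma> y (gd mult ginv y) = 1 \<and> \<sigma> (gr mult ginv y) y = 1"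
proof -
  interpret unital_partial_proj_rep G mult ginv S mul z act \<Gamma>
    using assms(1-3,5) by unfold_locales
  have xy: "x \<in> G" "y \<in> G" using assms(6) unfolding factor_dom_def by auto
  have nz: "\<Gamma> x \<noteq> z" "\<Gamma> y \<noteq> z" using factor_dom_rep_neq_zero[OF assms(6)] by auto
  show ?thesis
    using gd_in_factor_dom gr_in_factor_dom xy nz
      factor_set_gd_eq_1[OF assms(4)] factor_set_gr_eq_1[OF assms(4)] by blast
qed

end
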